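(* Consider, on $\{(\theta_1,\dots,\theta_4,I_1,\dots,I_4)\in\mathbb{T}^4\times(0,\infty)^4\}$, the Hamiltonian \[ \mathcal{G}:=2\sqrt{I_1I_2I_3I_4}\,\cos(\theta_1-\theta_2+\theta_3-\theta_4), \] with $(\theta_i,I_i)$, $i=1,\dots,4$, canonically conjugate pairs. Let $\mathtt{c}>0$. Then for every sufficiently small $\varepsilon>0$ with $\mathtt{c}>\tfrac83\varepsilon$ there exists an orbit $g_{\varepsilon,\mathtt{c}}(t)=(\theta_1(t),\dots,\theta_4(t),I_1(t),\dots,I_4(t))$ of $\mathcal{G}$ and a time $T_0>0$ such that \[ I_1(0)=I_2(0)=I_3(0)=\frac{\mathtt{c}-\varepsilon}{3},\qquad I_4(0)=\varepsilon, \] \[ I_1(T_0)=I_3(T_0)=\frac{\mathtt{c}}{6}+\frac{2\varepsilon}{3},\qquad I_2(T_0)=\frac{\mathtt{c}}{2}-\frac{4\varepsilon}{3},\qquad I_4(T_0)=\frac{\mathtt{c}}{6}, \] and $T_0\le\dfrac{6}{\mathtt{c}}$.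
   Context: The orbit is a solution of Hamilton's equations $\dot\theta_i=\partial_{I_i}\mathcal{G}$, $\dot I_i=-\partial_{\theta_i}\mathcal{G}$, $i=1,\dots,4$. "Sufficiently small $\varepsilon$" means $\varepsilon$ below a threshold that may depend on $\mathtt{c}$. *)

theory Defs
  imports "HOL-Analysis.Analysis"
begin

text \<open>Phase-space point: angles th i and actions I i for i = 1..4 (values at
other indices are irrelevant). The Hamiltonian
  G = 2 sqrt(I1 I2 I3 I4) cos(th1 - th2 + th3 - th4),
considered on T^4 x (0,inf)^4 (angles lifted to R).\<close>

definition G :: "(nat \<Rightarrow> real) \<Rightarrow> (nat \<Rightarrow> real) \<Rightarrow> real" where
  "G th I = 2 * sqrt (I 1 * I 2 * I 3 * I 4) * cos (th 1 - th 2 + th 3 - th 4)"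

definition dG_dth :: "nat \<Rightarrow> (nat \<Rightarrow> real) \<Rightarrow> (nat \<Rightarrow> real) \<Rightarrow> real" where
  "dG_dth i th I = deriv (\<lambda>s. G (th(i := s)) I) (th i)"

definition dG_dI :: "nat \<Rightarrow> (nat \<Rightarrow> real) \<Rightarrow> (nat \<Rightarrow> real) \<Rightarrow> real" where
  "dG_dI i th I = deriv (\<lambda>s. G th (I(i := s))) (I i)"

definition is_orbit_on ::
  "(real \<Rightarrow> nat \<Rightarrow> real) \<Rightarrow> (real \<Rightarrow> nat \<Rightarrow> real) \<Rightarrow> real \<Rightarrow> bool" where
  "is_orbit_on th I T \<longleftrightarrow>
     (\<forall>t\<in>{0..T}. \<forall>i\<in>{1..4::nat}. I t i > 0) \<and>
     (\<forall>t\<in>{0..T}. \<forall>i\<in>{1..4::nat}.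
        ((\<lambda>s. th s i) has_real_derivative dG_dI i (th t) (I t)) (at t within {0..T}) \<and>
        ((\<lambda>s. I s i) has_real_derivative - dG_dth i (th t) (I t)) (at t within {0..T}))"

end

theory Submission
  imports Defs "HOL-Complex_Analysis.Conformal_Mappings"
begin

text \<open>Freeze the angles at a point where the phase th1 - th2 + th3 - th4 equals -pi/2. There
the cosine vanishes, so the angles stay put, and the sine is -1, so Hamilton's equations move
the actions along the line I(0) + x (-1, 1, -1, 1) with x' = 2 sqrt(I1 I2 I3 I4). This scalar
autonomous equation has positive velocity and is solved by inverting t(x) = integral of dx / x'.
Starting from I(0) = (a, a, a, eps) with a = (c - eps)/3, the target is reached at
x = c/6 - eps. Along the way sqrt(eps + x) grows at rate at least (c/6) sqrt a, and it grows
by at most sqrt(c/6) <= sqrt a in total, so the transfer takes time at most 6/c.\<close>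

definition phase :: "(nat \<Rightarrow> real) \<Rightarrow> real" where
  "phase th = th 1 - th 2 + th 3 - th 4"

definition amplitude :: "(nat \<Rightarrow> real) \<Rightarrow> real" where
  "amplitude I = 2 * sqrt (I 1 * I 2 * I 3 * I 4)"

lemma G_eq_amplitude_cos_phase: "G th I = amplitude I * cos (phase th)"
  by (simp add: G_def amplitude_def phase_def)

lemma phase_fun_upd:
  assumes "i \<in> {1..4}"
  shows "phase (th(i := s)) = phase th - (-1) ^ i * (s - th i)"
proof -
  have "i = 1 \<or> i = 2 \<or> i = 3 \<or> i = 4" using assms by auto
  then show ?thesis by (auto simp: phase_def)
qed

lemma dG_dth_eq:
  assumes "i \<in> {1..4}"
  shows "dG_dth i th I = amplitude I * sin (phase th) * (-1) ^ i"
proof -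
  have "((\<lambda>s. amplitude I * cos (phase th - (-1) ^ i * (s - th i)))
          has_real_derivative amplitude I * sin (phase th) * (-1) ^ i) (at (th i))"
    by (auto intro!: derivative_eq_intros)
  then show ?thesis
    by (simp add: dG_dth_def G_eq_amplitude_cos_phase phase_fun_upd[OF assms] DERIV_imp_deriv)
qed

lemma dG_dI_eq_0:
  assumes "cos (phase th) = 0"
  shows "dG_dI i th I = 0"
  by (simp add: dG_dI_def G_eq_amplitude_cos_phase assms)

definition resonant_shift :: "(nat \<Rightarrow> real) \<Rightarrow> real \<Rightarrow> nat \<Rightarrow> real" where
  "resonant_shift A y i = A i + (-1) ^ i * y"

lemma is_orbit_on_resonant_shift:
  assumes phase: "phase th0 = - pi / 2"
    and pos: "\<And>t i. t \<in> {0..T} \<Longrightarrow> i \<in> {1..4} \<Longrightarrow> 0 < resonant_shift A (x t) i"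
    and deriv: "\<And>t. t \<in> {0..T} \<Longrightarrow>
                  (x has_real_derivative amplitude (resonant_shift A (x t))) (at t)"
  shows "is_orbit_on (\<lambda>_. th0) (\<lambda>t. resonant_shift A (x t)) T"
  unfolding is_orbit_on_def
proof (intro conjI ballI)
  fix t i assume t: "t \<in> {0..T}" and i: "i \<in> {1..4::nat}"
  show "0 < resonant_shift A (x t) i" using pos[OF t i] .
  show "((\<lambda>s. th0 i) has_real_derivative dG_dI i th0 (resonant_shift A (x t)))
          (at t within {0..T})"
    by (simp add: dG_dI_eq_0 phase)
  have "((\<lambda>s. resonant_shift A (x s) i) has_real_derivative
          (-1) ^ i * amplitude (resonant_shift A (x t))) (at t)"
    unfolding resonant_shift_def[of A _ i] using deriv[OF t] by (auto intro!: derivative_eq_intros)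
  then show "((\<lambda>s. resonant_shift A (x s) i) has_real_derivative
               - dG_dth i th0 (resonant_shift A (x t))) (at t within {0..T})"
    by (simp add: dG_dth_eq[OF i] phase mult.commute has_field_derivative_at_within)
qed

lemma sqrt_growth_time_bound:
  fixes x x' :: "real \<Rightarrow> real"
  assumes "0 \<le> T"
    and deriv: "\<And>t. t \<in> {0..T} \<Longrightarrow> (x has_real_derivative x' t) (at t)"
    and pos: "\<And>t. t \<in> {0..T} \<Longrightarrow> 0 < e + x t"
    and growth: "\<And>t. t \<in> {0..T} \<Longrightarrow> 2 * k * sqrt (e + x t) \<le> x' t"
  shows "k * T \<le> sqrt (e + x T) - sqrt (e + x 0)"
proof -
  have "sqrt (e + x 0) - k * 0 \<le> sqrt (e + x T) - k * T"
  proof (rule DERIV_nonneg_imp_nondecreasing[OF \<open>0 \<le> T\<close>])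
    fix t assume "0 \<le> t" "t \<le> T"
    then have t: "t \<in> {0..T}" by simp
    have "((\<lambda>t. sqrt (e + x t) - k * t) has_real_derivative
            x' t / (2 * sqrt (e + x t)) - k) (at t)"
      using deriv[OF t] pos[OF t] by (auto intro!: derivative_eq_intros simp: divide_simps)
    moreover have "k \<le> x' t / (2 * sqrt (e + x t))"
      using growth[OF t] pos[OF t] by (simp add: field_simps)
    ultimately show "\<exists>y. ((\<lambda>t. sqrt (e + x t) - k * t) has_real_derivative y) (at t) \<and> 0 \<le> y"
      by force
  qed
  then show ?thesis by simp
qed

lemma exists_solution_positive_velocity:
  fixes v :: "real \<Rightarrow> real"
  assumes cont: "continuous_on UNIV v" and pos: "\<And>y. 0 < v y" and "y0 < y1"
  shows "\<exists>x T. 0 < T \<and> x 0 = y0 \<and> x T = y1 \<and>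
           (\<forall>t\<in>{0..T}. x t \<in> {y0..y1} \<and> (x has_real_derivative v (x t)) (at t))"
proof -
  \<comment> \<open>The base point y0 - 1 puts [y0, y1] inside the open set S where tau is differentiable.\<close>
  define S where "S = {y0 - 1<..}"
  define tau where
    "tau y = integral {y0 - 1..y} (\<lambda>z. 1 / v z) - integral {y0 - 1..y0} (\<lambda>z. 1 / v z)" for y
  have tau_deriv: "(tau has_real_derivative 1 / v y) (at y)" if "y \<in> S" for y
  proof -
    have "continuous_on {y0 - 1..y + 1} (\<lambda>z. 1 / v z)"
      using pos
      by (intro continuous_intros continuous_on_subset[OF cont]) (auto simp: less_imp_neq[symmetric])
    then have "((\<lambda>y. integral {y0 - 1..y} (\<lambda>z. 1 / v z)) has_real_derivative 1 / v y)
                 (at y within {y0 - 1..y + 1})"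
      using that by (intro integral_has_real_derivative) (auto simp: S_def)
    moreover have "at y within {y0 - 1..y + 1} = at y"
      using that by (intro at_within_interior) (simp add: S_def)
    ultimately have "((\<lambda>y. integral {y0 - 1..y} (\<lambda>z. 1 / v z)) has_real_derivative 1 / v y) (at y)"
      by simp
    then show ?thesis
      unfolding tau_def by (rule DERIV_diff[OF _ DERIV_const, simplified])
  qed
  have tau_less: "tau u < tau w" if "u \<in> S" "u < w" for u w
  proof (rule DERIV_pos_imp_increasing[OF that(2)])
    fix z assume "u \<le> z" "z \<le> w"
    then have "z \<in> S" using that by (auto simp: S_def)
    then show "\<exists>y. (tau has_real_derivative y) (at z) \<and> 0 < y"
      using tau_deriv pos by (metis zero_less_divide_1_iff)
  qed
  have tau_isCont: "isCont tau y" if "y \<in> S" for y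
    using tau_deriv[OF that] by (rule DERIV_isCont)
  then have tau_cont: "continuous_on S tau"
    by (blast intro: continuous_at_imp_continuous_on)
  have "inj_on tau S"
  proof (rule inj_onI)
    fix u w assume "u \<in> S" "w \<in> S" "tau u = tau w"
    then show "u = w"
      using tau_less[of u w] tau_less[of w u] by (cases u w rule: linorder_cases) auto
  qed
  define x where "x = inv_into S tau"
  have x_tau: "x (tau y) = y" if "y \<in> S" for y
    using \<open>inj_on tau S\<close> that unfolding x_def by simp
  have S: "{y0..y1} \<subseteq> S" by (auto simp: S_def)
  have tau_y0: "tau y0 = 0" by (simp add: tau_def)
  define T where "T = tau y1"
  have "0 < T" using tau_less[of y0 y1] \<open>y0 < y1\<close> tau_y0 by (simp add: S_def T_def)
  moreover have "x t \<in> {y0..y1} \<and> (x has_real_derivative v (x t)) (at t)" if "t \<in> {0..T}" for t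
  proof -
    have "\<exists>y. y0 \<le> y \<and> y \<le> y1 \<and> tau y = t"
    proof (rule IVT)
      show "tau y0 \<le> t" "t \<le> tau y1" using that tau_y0 by (auto simp: T_def)
      show "\<forall>y. y0 \<le> y \<and> y \<le> y1 \<longrightarrow> isCont tau y"
        using tau_isCont by (simp add: S_def)
    qed (use \<open>y0 < y1\<close> in simp)
    then obtain y where y: "y \<in> {y0..y1}" "tau y = t" by auto
    then have "y \<in> S" using S by auto
    have "(x has_real_derivative inverse (1 / v y)) (at (tau y))"
      by (rule has_field_derivative_inverse_strong
            [OF tau_deriv[OF \<open>y \<in> S\<close>] _ _ \<open>y \<in> S\<close> tau_cont x_tau])
         (use pos[of y] in \<open>auto simp: S_def\<close>)
    then show ?thesis using y x_tau[OF \<open>y \<in> S\<close>] by simp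
  qed
  moreover have "x 0 = y0" "x T = y1"
    using x_tau[of y0] x_tau[of y1] \<open>y0 < y1\<close> tau_y0 by (simp_all add: S_def T_def)
  ultimately show ?thesis by blast
qed

lemma exists_solution_positive_velocity_on:
  fixes v :: "real \<Rightarrow> real"
  assumes cont: "continuous_on {y0..y1} v" and pos: "\<And>y. y \<in> {y0..y1} \<Longrightarrow> 0 < v y"
    and "y0 < y1"
  shows "\<exists>x T. 0 < T \<and> x 0 = y0 \<and> x T = y1 \<and>
           (\<forall>t\<in>{0..T}. x t \<in> {y0..y1} \<and> (x has_real_derivative v (x t)) (at t))"
proof -
  define clamp where "clamp y = max y0 (min y1 y)" for y
  have clamp_in: "clamp y \<in> {y0..y1}" for y
    using \<open>y0 < y1\<close> by (simp add: clamp_def)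
  have clamp_id: "clamp y = y" if "y \<in> {y0..y1}" for y
    using that by (simp add: clamp_def)
  have "continuous_on UNIV clamp"
    unfolding clamp_def by (intro continuous_intros)
  then have "continuous_on UNIV (\<lambda>y. v (clamp y))"
    using clamp_in by (intro continuous_on_compose2[OF cont]) auto
  then have "\<exists>x T. 0 < T \<and> x 0 = y0 \<and> x T = y1 \<and>
               (\<forall>t\<in>{0..T}. x t \<in> {y0..y1} \<and> (x has_real_derivative v (clamp (x t))) (at t))"
    using pos clamp_in \<open>y0 < y1\<close> by (intro exists_solution_positive_velocity) auto
  then show ?thesis
    using clamp_id by (metis (no_types, lifting))
qed

lemma resonant_shift_pos:
  assumes "0 \<le> y" "y < a" "0 < e"
  shows "0 < resonant_shift (\<lambda>i. if i = 4 then e else a) y i"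
proof -
  have "- y \<le> (-1) ^ i * y" using assms(1) by (cases "even i") auto
  then show ?thesis using assms by (auto simp: resonant_shift_def)
qed

lemma amplitude_resonant_shift_ge:
  assumes "0 \<le> y" "0 \<le> k" "k \<le> a - y" "0 < e"
  shows "2 * (k * sqrt a) * sqrt (e + y)
           \<le> amplitude (resonant_shift (\<lambda>i. if i = 4 then e else a) y)"
proof -
  have "k\<^sup>2 * a * (e + y) \<le> (a - y)\<^sup>2 * (a + y) * (e + y)"
    using assms by (intro mult_mono power_mono) auto
  then have "sqrt (k\<^sup>2 * a * (e + y)) \<le> sqrt ((a - y)\<^sup>2 * (a + y) * (e + y))"
    by (rule real_sqrt_le_mono)
  moreover have "amplitude (resonant_shift (\<lambda>i. if i = 4 then e else a) y)
                   = 2 * sqrt ((a - y)\<^sup>2 * (a + y) * (e + y))"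
    by (simp add: amplitude_def resonant_shift_def power2_eq_square mult_ac)
  ultimately show ?thesis
    using assms by (simp add: real_sqrt_mult)
qed

lemma transfer_orbit_exists:
  fixes c \<epsilon> :: real
  assumes "0 < \<epsilon>" "\<epsilon> < c / 6"
  shows "\<exists>th I T0. T0 > 0 \<and> is_orbit_on th I T0 \<and>
           I 0 1 = (c - \<epsilon>) / 3 \<and> I 0 2 = (c - \<epsilon>) / 3 \<and> I 0 3 = (c - \<epsilon>) / 3 \<and>
           I 0 4 = \<epsilon> \<and>
           I T0 1 = c/6 + 2*\<epsilon>/3 \<and> I T0 3 = c/6 + 2*\<epsilon>/3 \<and>
           I T0 2 = c/2 - 4*\<epsilon>/3 \<and> I T0 4 = c/6 \<and>
           T0 \<le> 6 / c"
proof -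
  define a where "a = (c - \<epsilon>) / 3"
  define d where "d = c / 6 - \<epsilon>"
  define A where "A = (\<lambda>i::nat. if i = 4 then \<epsilon> else a)"
  have "0 < d" "c / 6 \<le> a" and gap: "c / 6 \<le> a - d"
    using assms by (simp_all add: a_def d_def field_simps)
  have pos: "0 < resonant_shift A y i" if "y \<in> {0..d}" for y i
    unfolding A_def using that gap assms by (intro resonant_shift_pos) auto
  have "continuous_on {0..d} (\<lambda>y. amplitude (resonant_shift A y))"
    unfolding amplitude_def resonant_shift_def by (intro continuous_intros)
  moreover have "0 < amplitude (resonant_shift A y)" if "y \<in> {0..d}" for y
    using pos[OF that] by (simp add: amplitude_def)
  ultimately obtain x T where "0 < T" "x 0 = 0" "x T = d"
    and sol: "\<And>t. t \<in> {0..T} \<Longrightarrow>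
                x t \<in> {0..d} \<and> (x has_real_derivative amplitude (resonant_shift A (x t))) (at t)"
    using exists_solution_positive_velocity_on[of 0 d "\<lambda>y. amplitude (resonant_shift A y)"] \<open>0 < d\<close>
    by blast
  define th0 :: "nat \<Rightarrow> real" where "th0 = (\<lambda>i. if i = 1 then - pi / 2 else 0)"
  have "phase th0 = - pi / 2" by (simp add: phase_def th0_def)
  then have orbit: "is_orbit_on (\<lambda>_. th0) (\<lambda>t. resonant_shift A (x t)) T"
    using sol pos by (intro is_orbit_on_resonant_shift) auto
  have "c / 6 * sqrt a * T \<le> sqrt (\<epsilon> + x T) - sqrt (\<epsilon> + x 0)"
  proof (rule sqrt_growth_time_bound[where x' = "\<lambda>t. amplitude (resonant_shift A (x t))"])
    fix t assume "t \<in> {0..T}"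
    with sol have "x t \<in> {0..d}" by blast
    show "(x has_real_derivative amplitude (resonant_shift A (x t))) (at t)"
      using sol \<open>t \<in> {0..T}\<close> by blast
    show "0 < \<epsilon> + x t"
      using \<open>x t \<in> {0..d}\<close> assms by simp
    show "2 * (c / 6 * sqrt a) * sqrt (\<epsilon> + x t) \<le> amplitude (resonant_shift A (x t))"
      unfolding A_def using \<open>x t \<in> {0..d}\<close> gap assms
      by (intro amplitude_resonant_shift_ge) auto
  qed (use \<open>0 < T\<close> in simp)
  also have "\<dots> = sqrt (c / 6) - sqrt \<epsilon>"
    using \<open>x 0 = 0\<close> \<open>x T = d\<close> by (simp add: d_def)
  also have "\<dots> \<le> sqrt a"
    using real_sqrt_le_mono[OF \<open>c / 6 \<le> a\<close>] real_sqrt_ge_zero[of \<epsilon>] assms(1)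
    by linarith
  finally have "T \<le> 6 / c"
    using assms \<open>c / 6 \<le> a\<close> by (simp add: field_simps)
  show ?thesis
    by (rule exI[of _ "\<lambda>_. th0"], rule exI[of _ "\<lambda>t. resonant_shift A (x t)"], rule exI[of _ T])
       (use \<open>T \<le> 6 / c\<close> \<open>0 < T\<close> orbit \<open>x 0 = 0\<close> \<open>x T = d\<close> in
         \<open>simp add: resonant_shift_def A_def a_def d_def field_simps\<close>)
qed

theorem lemma4p1:
  fixes c :: real
  assumes "c > 0"
  shows "\<exists>\<epsilon>0>0. \<forall>\<epsilon>::real. 0 < \<epsilon> \<and> \<epsilon> < \<epsilon>0 \<and> c > 8/3 * \<epsilon> \<longrightarrow>
           (\<exists>th I T0. T0 > 0 \<and> is_orbit_on th I T0 \<and>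
              I 0 1 = (c - \<epsilon>) / 3 \<and> I 0 2 = (c - \<epsilon>) / 3 \<and> I 0 3 = (c - \<epsilon>) / 3 \<and>
              I 0 4 = \<epsilon> \<and>
              I T0 1 = c/6 + 2*\<epsilon>/3 \<and> I T0 3 = c/6 + 2*\<epsilon>/3 \<and>
              I T0 2 = c/2 - 4*\<epsilon>/3 \<and> I T0 4 = c/6 \<and>
              T0 \<le> 6 / c)"
  using assms by (intro exI[of _ "c / 6"] conjI allI impI transfer_orbit_exists) auto

end
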